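(* In the setting described in the context, assume the following stable recovery property holds: there exist $C>0$ and $\delta>0$ such that for any $\mathcal{S}\in\mathfrak{M}$, any $\overline{\mathbf{h}}\in\mathbb{R}^{S\times K}_{\mathcal{S}}$, any $X=\mathcal{A}P(\overline{\mathbf{h}})+e$ with $\|e\|\le\delta$, and any $\mathcal{S}^*\in\mathfrak{M}$ and $\mathbf{h}^*\in\mathbb{R}^{S\times K}_{\mathcal{S}^*}$ such that $\|\mathcal{A}P(\mathbf{h}^* )-X\|\le\|e\|$, we have $$d_2([\mathbf{h}^*],[\overline{\mathbf{h}}])\le C\min\left(\|P(\overline{\mathbf{h}})\|_\infty^{\frac1K-1},\|P(\mathbf{h}^* )\|_\infty^{\frac1K-1}\right)\|e\|.$$ Then $\mathcal{A}$ satisfies the Deep-$\mathfrak{M}$-Null Space Property with constants $$\gamma=C\,S^{\frac{K-1}{2}}\sqrt{K}\,\sigma_{max}\qquad\text{and}\qquad\rho=\delta,$$ where $\sigma_{max}$ is the spectral radius of $\mathcal{A}$ (its largest singular value, so that $\|\mathcal{A}T\|\le\sigma_{max}\|T\|$ for all $T$).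
   Context: Let $K,S\ge 1$ and $m_1,\dots,m_{K+1}$ be positive integers, $\mathbb{N}_S=\{1,\dots,S\}$, and for $k=1,\dots,K$ let $M_k:\mathbb{R}^S\to\mathbb{R}^{m_k\times m_{k+1}}$ be linear. Parameters are $\mathbf{h}=(\mathbf{h}_1,\dots,\mathbf{h}_K)\in\mathbb{R}^{S\times K}$, $\mathbf{h}_k\in\mathbb{R}^S$ with entries $\mathbf{h}_{k,i}$. $\mathbb{R}^{S^K}$ is the space of real order-$K$ tensors with all axes of size $S$, indexed by $\mathbf{i}\in\mathbb{N}_S^K$; $\|\cdot\|$ is the Euclidean norm and $\|\cdot\|_p$ the entrywise $\ell^p$ norm. Segre embedding: $P(\mathbf{h})_{\mathbf{i}}=\mathbf{h}_{1,\mathbf{i}_1}\cdots\mathbf{h}_{K,\mathbf{i}_K}$. The lifting operator $\mathcal{A}:\mathbb{R}^{S^K}\to\mathbb{R}^{m_1\times m_{K+1}}$ is the unique linear map with $\mathcal{A}P(\mathbf{h})=M_1(\mathbf{h}_1)\cdots M_K(\mathbf{h}_K)$ for all $\mathbf{h}$; matrices carry the Frobenius norm. A support is $\mathcal{S}=(\mathcal{S}_1,\dots,\mathcal{S}_K)$, $\mathcal{S}_k\subset\mathbb{N}_S$; unions are componentwise; $\mathbf{i}\in\mathcal{S}$ means $\mathbf{i}_k\in\mathcal{S}_k$ for all $k$. $\mathbb{R}^{S\times K}_{\mathcal{S}}=\{\mathbf{h}:\mathbf{h}_{k,i}=0\text{ whenever }i\notin\mathcal{S}_k\}$, $\mathbb{T}_{\mathcal{S}}=\{T: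 T_{\mathbf{i}}=0\text{ whenever }\mathbf{i}\notin\mathcal{S}\}$, $P_{\mathcal{S}}$ the orthogonal projection onto $\mathbb{T}_{\mathcal{S}}$, $\mathcal{A}_{\mathcal{S}}=\mathcal{A}P_{\mathcal{S}}$. $\mathfrak{M}$ is a given finite family of supports. Deep-$\mathfrak{M}$-Null Space Property with constants $(\gamma,\rho)$, $\gamma\ge1,\rho>0$: for all $\mathcal{S},\mathcal{S}'\in\mathfrak{M}$, every $T\in P(\mathbb{R}^{S\times K}_{\mathcal{S}})+P(\mathbb{R}^{S\times K}_{\mathcal{S}'})$ with $\|\mathcal{A}_{\mathcal{S}\cup\mathcal{S}'}T\|\le\rho$ and every $T'\in\ker\mathcal{A}_{\mathcal{S}\cup\mathcal{S}'}$ satisfy $\|T\|\le\gamma\|T-P_{\mathcal{S}\cup\mathcal{S}'}T'\|$. Metric $d_p$: let $\mathbb{R}^{S\times K}_*=\{\mathbf{h}:\mathbf{h}_k\ne0\ \forall k\}$; $\mathbf{h}\sim\mathbf{g}$ iff there are $\lambda_1,\dots,\lambda_K$ with $\prod_k\lambda_k=1$ and $\mathbf{h}_k=\lambda_k\mathbf{g}_k$ for all $k$; $[\mathbf{h}]$ is the class of $\mathbf{h}$. With $\mathbb{R}^{S\times K}_{diag}=\{\mathbf{h}\in\mathbb{R}^{S\times K}_*:\|\mathbf{h}_k\|_\infty=\|\mathbf{h}_1\|_\infty\ \forall k\}$, $d_p([\mathbf{h}],[\mathbf{g}])=\inf\{\|\mathbf{h}'-\mathbf{g}'\|_p:\mathbf{h}'\in[\mathbf{h}]\cap\mathbb{R}^{S\times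 K}_{diag},\ \mathbf{g}'\in[\mathbf{g}]\cap\mathbb{R}^{S\times K}_{diag}\}$ for $\mathbf{h},\mathbf{g}\in\mathbb{R}^{S\times K}_*$. *)

theory Defs
  imports Complex_Main "HOL-Library.FuncSet"
begin

(* Conventions (0-based): factor index k \<in> {0..<K}, coordinate index i \<in> {0..<S},
   matrix dimensions m 0, ..., m K (paper: m_1,...,m_{K+1}).
   Parameters h \<in> R^{S\<times>K}: h k i, zero outside k<K, i<S.
   Tensors in R^{S^K}: functions on multi-indices (nat \<Rightarrow> nat), zero outside
   the index set idx S K = Pi\<^sub>E {..<K} (\<lambda>_. {..<S}). *)

type_synonym vec = "nat \<Rightarrow> real"
type_synonym param = "nat \<Rightarrow> nat \<Rightarrow> real"
type_synonym tensor = "(nat \<Rightarrow> nat) \<Rightarrow> real"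
type_synonym mat = "nat \<Rightarrow> nat \<Rightarrow> real"
type_synonym support = "nat \<Rightarrow> nat set"

definition vecs :: "nat \<Rightarrow> vec set" where
  "vecs S = {v. \<forall>i. i \<ge> S \<longrightarrow> v i = 0}"

definition params :: "nat \<Rightarrow> nat \<Rightarrow> param set" where
  "params S K = {h. \<forall>k i. (k \<ge> K \<or> i \<ge> S) \<longrightarrow> h k i = 0}"

definition idx :: "nat \<Rightarrow> nat \<Rightarrow> (nat \<Rightarrow> nat) set" where
  "idx S K = Pi\<^sub>E {..<K} (\<lambda>_. {..<S})"

definition tensors :: "nat \<Rightarrow> nat \<Rightarrow> tensor set" where
  "tensors S K = {T. \<forall>i. i \<notin> idx S K \<longrightarrow> T i = 0}"

definition mats :: "nat \<Rightarrow> nat \<Rightarrow> mat set" where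
  "mats a b = {X. \<forall>r c. \<not> (r < a \<and> c < b) \<longrightarrow> X r c = 0}"

definition matmul :: "nat \<Rightarrow> nat \<Rightarrow> nat \<Rightarrow> mat \<Rightarrow> mat \<Rightarrow> mat" where
  "matmul a n b X Y = (\<lambda>r c. if r < a \<and> c < b then (\<Sum>l<n. X r l * Y l c) else 0)"

fun mchain :: "(nat \<Rightarrow> nat) \<Rightarrow> (nat \<Rightarrow> mat) \<Rightarrow> nat \<Rightarrow> mat" where
  "mchain m F 0 = (\<lambda>r c. if r = c \<and> r < m 0 then 1 else 0)"
| "mchain m F (Suc k) = matmul (m 0) (m k) (m (Suc k)) (mchain m F k) (F k)"

definition segre :: "nat \<Rightarrow> nat \<Rightarrow> param \<Rightarrow> tensor" where
  "segre S K h = (\<lambda>i. if i \<in> idx S K then (\<Prod>k<K. h k (i k)) else 0)"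

definition tnorm :: "nat \<Rightarrow> nat \<Rightarrow> tensor \<Rightarrow> real" where
  "tnorm S K T = sqrt (\<Sum>i\<in>idx S K. (T i)\<^sup>2)"

definition fro :: "nat \<Rightarrow> nat \<Rightarrow> mat \<Rightarrow> real" where
  "fro a b X = sqrt (\<Sum>r<a. \<Sum>c<b. (X r c)\<^sup>2)"

definition tinf :: "nat \<Rightarrow> nat \<Rightarrow> tensor \<Rightarrow> real" where
  "tinf S K T = Max ((\<lambda>i. \<bar>T i\<bar>) ` idx S K)"

definition madd :: "mat \<Rightarrow> mat \<Rightarrow> mat" where
  "madd X Y = (\<lambda>r c. X r c + Y r c)"

definition msub :: "mat \<Rightarrow> mat \<Rightarrow> mat" where
  "msub X Y = (\<lambda>r c. X r c - Y r c)"

definition is_lifting ::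
  "nat \<Rightarrow> nat \<Rightarrow> (nat \<Rightarrow> nat) \<Rightarrow> (nat \<Rightarrow> vec \<Rightarrow> mat) \<Rightarrow> (tensor \<Rightarrow> mat) \<Rightarrow> bool" where
  "is_lifting S K m M A \<longleftrightarrow>
     (\<forall>T\<in>tensors S K. A T \<in> mats (m 0) (m K))
   \<and> (\<forall>T\<in>tensors S K. \<forall>T'\<in>tensors S K. \<forall>a b::real.
        A (\<lambda>i. a * T i + b * T' i) = (\<lambda>r c. a * A T r c + b * A T' r c))
   \<and> (\<forall>h\<in>params S K. A (segre S K h) = mchain m (\<lambda>k. M k (h k)) K)"

definition linear_factors :: "nat \<Rightarrow> nat \<Rightarrow> (nat \<Rightarrow> nat) \<Rightarrow> (nat \<Rightarrow> vec \<Rightarrow> mat) \<Rightarrow> bool" where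
  "linear_factors S K m M \<longleftrightarrow> (\<forall>k<K.
      (\<forall>v\<in>vecs S. M k v \<in> mats (m k) (m (Suc k)))
    \<and> (\<forall>v\<in>vecs S. \<forall>w\<in>vecs S. \<forall>a b::real.
        M k (\<lambda>i. a * v i + b * w i) = (\<lambda>r c. a * M k v r c + b * M k w r c)))"

definition sunion :: "support \<Rightarrow> support \<Rightarrow> support" where
  "sunion Sp Sp' = (\<lambda>k. Sp k \<union> Sp' k)"

definition in_supp :: "nat \<Rightarrow> (nat \<Rightarrow> nat) \<Rightarrow> support \<Rightarrow> bool" where
  "in_supp K i Sp \<longleftrightarrow> (\<forall>k<K. i k \<in> Sp k)"

definition params_S :: "nat \<Rightarrow> nat \<Rightarrow> support \<Rightarrow> param set" where
  "params_S S K Sp = {h\<in>params S K. \<forall>k<K. \<forall>i. i \<notin> Sp k \<longrightarrow> h k i = 0}"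

definition proj :: "nat \<Rightarrow> nat \<Rightarrow> support \<Rightarrow> tensor \<Rightarrow> tensor" where
  "proj S K Sp T = (\<lambda>i. if in_supp K i Sp then T i else 0)"

definition segre_sum :: "nat \<Rightarrow> nat \<Rightarrow> support \<Rightarrow> support \<Rightarrow> tensor set" where
  "segre_sum S K Sp Sp' =
     {(\<lambda>i. segre S K h i + segre S K g i) | h g. h \<in> params_S S K Sp \<and> g \<in> params_S S K Sp'}"

definition deep_NSP ::
  "nat \<Rightarrow> nat \<Rightarrow> (nat \<Rightarrow> nat) \<Rightarrow> (tensor \<Rightarrow> mat) \<Rightarrow> support set \<Rightarrow> real \<Rightarrow> real \<Rightarrow> bool" where
  "deep_NSP S K m A MM \<gamma> \<rho> \<longleftrightarrow>
    (\<forall>Sp\<in>MM. \<forall>Sp'\<in>MM. \<forall>T T'.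
       T \<in> segre_sum S K Sp Sp'
     \<and> fro (m 0) (m K) (A (proj S K (sunion Sp Sp') T)) \<le> \<rho>
     \<and> T' \<in> tensors S K
     \<and> A (proj S K (sunion Sp Sp') T') = (\<lambda>_ _. 0)
     \<longrightarrow> tnorm S K T \<le> \<gamma> * tnorm S K (\<lambda>i. T i - proj S K (sunion Sp Sp') T' i))"

definition params_star :: "nat \<Rightarrow> nat \<Rightarrow> param set" where
  "params_star S K = {h\<in>params S K. \<forall>k<K. \<exists>i<S. h k i \<noteq> 0}"

definition equiv_param :: "nat \<Rightarrow> param \<Rightarrow> param \<Rightarrow> bool" where
  "equiv_param K h g \<longleftrightarrow>
     (\<exists>lam::nat \<Rightarrow> real. (\<Prod>k<K. lam k) = 1 \<and> (\<forall>k<K. \<forall>i. h k i = lam k * g k i))"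

definition vinf :: "nat \<Rightarrow> vec \<Rightarrow> real" where
  "vinf S v = Max ((\<lambda>i. \<bar>v i\<bar>) ` {..<S})"

definition params_diag :: "nat \<Rightarrow> nat \<Rightarrow> param set" where
  "params_diag S K = {h\<in>params_star S K. \<forall>k<K. vinf S (h k) = vinf S (h 0)}"

definition pnorm2 :: "nat \<Rightarrow> nat \<Rightarrow> param \<Rightarrow> real" where
  "pnorm2 S K h = sqrt (\<Sum>k<K. \<Sum>i<S. (h k i)\<^sup>2)"

definition d2 :: "nat \<Rightarrow> nat \<Rightarrow> param \<Rightarrow> param \<Rightarrow> real" where
  "d2 S K h g = Inf {pnorm2 S K (\<lambda>k i. h' k i - g' k i) | h' g'.
      h' \<in> params_diag S K \<and> equiv_param K h' h \<and>
      g' \<in> params_diag S K \<and> equiv_param K g' g}"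

definition sigma_max :: "nat \<Rightarrow> nat \<Rightarrow> (nat \<Rightarrow> nat) \<Rightarrow> (tensor \<Rightarrow> mat) \<Rightarrow> real" where
  "sigma_max S K m A = Sup {fro (m 0) (m K) (A T) | T. T \<in> tensors S K \<and> tnorm S K T \<le> 1}"

end

theory Submission
  imports Defs "HOL-Analysis.L2_Norm"
begin

text \<open>Every T in P(R_S) + P(R_S') can be written as P hb - P hs with hb, hs nondegenerate.
  For the noise e = -A T the data A (P hb) + e is fitted exactly by hs, so stability bounds
  d_2([hs], [hb]) by C min(\<parallel>P hb\<parallel>_\<infinity>, \<parallel>P hs\<parallel>_\<infinity>)^(1/K - 1) \<parallel>A T\<parallel>.
  Conversely the Segre map is Lipschitz for d_2: balanced representatives have entries bounded
  by some c with c^K \<le> \<parallel>P h\<parallel>_\<infinity>, and telescoping gives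
  \<parallel>P h - P g\<parallel> \<le> (\<surd>S c)^(K-1) \<surd>K \<parallel>h - g\<parallel>. The powers of the sup norms cancel, so
  \<parallel>T\<parallel> \<le> C S^((K-1)/2) \<surd>K \<parallel>A T\<parallel>; finally A T = A (T - P_{S\<union>S'} T') for T' in the kernel,
  and \<parallel>A U\<parallel> \<le> \<sigma>_max \<parallel>U\<parallel>.\<close>

section \<open>L2 norms and the Segre map\<close>

lemma real_sqrt_prod: "finite A \<Longrightarrow> sqrt (\<Prod>x\<in>A. f x) = (\<Prod>x\<in>A. sqrt (f x))"
  by (induction A rule: finite_induct) (auto simp: real_sqrt_mult)

lemma L2_set_sum_le:
  assumes "finite J"
  shows "L2_set (\<lambda>i. \<Sum>j\<in>J. f j i) A \<le> (\<Sum>j\<in>J. L2_set (f j) A)"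
  using assms
proof (induction J rule: finite_induct)
  case (insert x F)
  have "L2_set (\<lambda>i. f x i + (\<Sum>j\<in>F. f j i)) A \<le> L2_set (f x) A + L2_set (\<lambda>i. \<Sum>j\<in>F. f j i) A"
    by (rule L2_set_triangle_ineq)
  with insert show ?case by simp
qed (simp add: L2_set_def)

lemma L2_set_prod_PiE:
  assumes "finite A" "\<And>x. x \<in> A \<Longrightarrow> finite (B x)"
  shows "L2_set (\<lambda>i. \<Prod>x\<in>A. f x (i x)) (Pi\<^sub>E A B) = (\<Prod>x\<in>A. L2_set (f x) (B x))"
proof -
  have "(\<Sum>i\<in>Pi\<^sub>E A B. (\<Prod>x\<in>A. f x (i x))\<^sup>2) = (\<Prod>x\<in>A. \<Sum>y\<in>B x. (f x y)\<^sup>2)"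
    by (simp add: prod_sum_PiE[OF assms] prod_power_distrib)
  then show ?thesis
    by (simp add: L2_set_def real_sqrt_prod[OF assms(1)])
qed

lemma L2_set_le_sqrt_card_mult:
  assumes "\<And>x. x \<in> A \<Longrightarrow> \<bar>f x\<bar> \<le> c" "c \<ge> 0"
  shows "L2_set f A \<le> sqrt (real (card A)) * c"
proof -
  have "L2_set f A = L2_set (\<lambda>x. \<bar>f x\<bar>) A" by (simp add: L2_set_def)
  also have "\<dots> \<le> L2_set (\<lambda>_. c) A" using assms(1) by (intro L2_set_mono) auto
  finally show ?thesis using assms(2) by (simp add: L2_set_constant)
qed

lemma sum_le_sqrt_card_mult_L2_set:
  "(\<Sum>x\<in>A. f x) \<le> sqrt (real (card A)) * L2_set f A"
proof -
  have "(\<Sum>x\<in>A. f x) \<le> (\<Sum>x\<in>A. \<bar>f x\<bar> * \<bar>1::real\<bar>)" by (intro sum_mono) simp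
  also have "\<dots> \<le> L2_set f A * L2_set (\<lambda>_. 1) A" by (rule L2_set_mult_ineq)
  finally show ?thesis by (simp add: L2_set_constant mult.commute)
qed

lemma prod_diff_prod_telescope:
  fixes a b :: "nat \<Rightarrow> 'a::comm_ring_1"
  shows "(\<Prod>k<K. a k) - (\<Prod>k<K. b k)
       = (\<Sum>k<K. \<Prod>j<K. if j < k then b j else if j = k then a j - b j else a j)"
proof -
  define Q where "Q n = (\<Prod>j<n. b j) * (\<Prod>j\<in>{n..<K}. a j)" for n
  have "Q k - Q (Suc k) = (\<Prod>j<K. if j < k then b j else if j = k then a j - b j else a j)"
    if "k < K" for k
  proof -
    let ?c = "\<lambda>j. if j < k then b j else if j = k then a j - b j else a j"
    have "(\<Prod>j<K. ?c j) = (\<Prod>j\<in>{0..<k}. ?c j) * (\<Prod>j\<in>{k..<K}. ?c j)"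
      using that prod.atLeastLessThan_concat[of 0 k K ?c] by (simp add: atLeast0LessThan)
    also have "\<dots> = (\<Prod>j<k. b j) * ((a k - b k) * (\<Prod>j\<in>{Suc k..<K}. a j))"
      using that by (simp add: atLeast0LessThan prod.atLeast_Suc_lessThan)
    finally show ?thesis
      using that by (simp add: Q_def prod.atLeast_Suc_lessThan algebra_simps)
  qed
  then have "(\<Sum>k<K. \<Prod>j<K. if j < k then b j else if j = k then a j - b j else a j)
      = (\<Sum>k<K. Q k - Q (Suc k))" by simp
  also have "\<dots> = Q 0 - Q K" by (rule sum_lessThan_telescope')
  finally show ?thesis by (simp add: Q_def atLeast0LessThan)
qed

lemma finite_idx [simp]: "finite (idx S K)"
  by (simp add: idx_def finite_PiE)

lemma tnorm_eq_L2_set: "tnorm S K T = L2_set T (idx S K)"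
  by (simp add: tnorm_def L2_set_def)

lemma pnorm2_eq_L2_set: "pnorm2 S K h = L2_set (\<lambda>k. L2_set (h k) {..<S}) {..<K}"
  by (simp add: pnorm2_def L2_set_def sum_nonneg)

text \<open>Telescope the difference of products into K rank-one tensors, each with one
  difference factor and K-1 factors of norm at most \<surd>S c.\<close>
lemma tnorm_segre_diff_le:
  fixes h g :: param
  assumes c: "c \<ge> 0"
    and h: "\<And>k s. k < K \<Longrightarrow> s < S \<Longrightarrow> \<bar>h k s\<bar> \<le> c"
    and g: "\<And>k s. k < K \<Longrightarrow> s < S \<Longrightarrow> \<bar>g k s\<bar> \<le> c"
  shows "tnorm S K (\<lambda>i. segre S K h i - segre S K g i)
     \<le> (sqrt (real S) * c) ^ (K - 1) * sqrt (real K) * pnorm2 S K (\<lambda>k i. h k i - g k i)"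
proof -
  define F where "F k j = (\<lambda>s. if j < k then g j s else if j = k then h j s - g j s else h j s)"
    for k j
  let ?B = "(sqrt (real S) * c) ^ (K - 1)"
  have L2_le: "L2_set f {..<S} \<le> sqrt (real S) * c" if "\<And>s. s < S \<Longrightarrow> \<bar>f s\<bar> \<le> c" for f
    using L2_set_le_sqrt_card_mult[of "{..<S}" f c] that c by simp
  have factor_bound: "(\<Prod>j<K. L2_set (F k j) {..<S}) \<le> L2_set (\<lambda>s. h k s - g k s) {..<S} * ?B"
    if k: "k < K" for k
  proof -
    have "(\<Prod>j\<in>{..<K} - {k}. L2_set (F k j) {..<S}) \<le> (\<Prod>j\<in>{..<K} - {k}. sqrt (real S) * c)"
      using c h g by (intro prod_mono) (auto simp: F_def intro!: L2_le)
    also have "\<dots> = ?B" using k by (simp add: card_Diff_singleton)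
    finally show ?thesis
      using k by (simp add: prod.remove F_def mult_left_mono)
  qed
  have "tnorm S K (\<lambda>i. segre S K h i - segre S K g i)
      = L2_set (\<lambda>i. \<Sum>k<K. \<Prod>j<K. F k j (i j)) (idx S K)"
    unfolding tnorm_eq_L2_set
    by (rule L2_set_cong) (auto simp: segre_def F_def prod_diff_prod_telescope)
  also have "\<dots> \<le> (\<Sum>k<K. L2_set (\<lambda>i. \<Prod>j<K. F k j (i j)) (idx S K))"
    by (rule L2_set_sum_le) simp
  also have "\<dots> = (\<Sum>k<K. \<Prod>j<K. L2_set (F k j) {..<S})"
    by (simp add: idx_def L2_set_prod_PiE)
  also have "\<dots> \<le> (\<Sum>k<K. L2_set (\<lambda>s. h k s - g k s) {..<S}) * ?B"
    unfolding sum_distrib_right by (rule sum_mono) (rule factor_bound, simp)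
  also have "\<dots> \<le> sqrt (real K) * pnorm2 S K (\<lambda>k i. h k i - g k i) * ?B"
    using c by (intro mult_right_mono)
      (simp_all add: pnorm2_eq_L2_set sum_le_sqrt_card_mult_L2_set[where A="{..<K}", simplified])
  finally show ?thesis by (simp add: mult_ac)
qed

section \<open>Balanced representatives and the metric d_2\<close>

lemma abs_le_vinf: "s < S \<Longrightarrow> \<bar>v s\<bar> \<le> vinf S v"
  unfolding vinf_def by (rule Max_ge) auto

lemma vinf_attained: "S \<ge> 1 \<Longrightarrow> \<exists>s<S. \<bar>v s\<bar> = vinf S v"
proof -
  assume "S \<ge> 1"
  then have "vinf S v \<in> (\<lambda>i. \<bar>v i\<bar>) ` {..<S}"
    unfolding vinf_def by (intro Max_in) (auto simp: lessThan_empty_iff)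
  then show ?thesis by auto
qed

lemma vinf_scale:
  assumes "S \<ge> 1"
  shows "vinf S (\<lambda>i. l * v i) = \<bar>l\<bar> * vinf S v"
proof -
  obtain s where s: "s < S" "\<bar>v s\<bar> = vinf S v" using vinf_attained assms by blast
  have "\<bar>l * v i\<bar> \<le> \<bar>l\<bar> * vinf S v" if "i < S" for i
    using abs_le_vinf[OF that, of v] by (simp add: abs_mult mult_left_mono)
  moreover have "\<bar>l\<bar> * vinf S v \<in> (\<lambda>i. \<bar>l * v i\<bar>) ` {..<S}"
    using s by (auto simp: abs_mult intro!: image_eqI[where x=s])
  ultimately show ?thesis
    unfolding vinf_def[of S "\<lambda>i. l * v i"] by (intro Max_eqI) auto
qed

lemma vinf_pos_if_params_star:
  assumes "h \<in> params_star S K" "k < K"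
  shows "vinf S (h k) > 0"
proof -
  obtain i where "i < S" "h k i \<noteq> 0" using assms unfolding params_star_def by blast
  then show ?thesis using abs_le_vinf[of i S "h k"] by simp
qed

lemma segre_eq_if_equiv_param:
  assumes "equiv_param K h' h"
  shows "segre S K h' = segre S K h"
proof
  fix i
  obtain lam where lam: "(\<Prod>k<K. lam k) = 1" "\<forall>k<K. \<forall>i. h' k i = lam k * h k i"
    using assms unfolding equiv_param_def by blast
  have "(\<Prod>k<K. h' k (i k)) = (\<Prod>k<K. lam k) * (\<Prod>k<K. h k (i k))"
    using lam(2) by (simp add: prod.distrib[symmetric])
  then show "segre S K h' i = segre S K h i" by (simp add: segre_def lam(1))
qed

lemma prod_vinf_le_tinf_segre:
  assumes "S \<ge> 1"
  shows "(\<Prod>k<K. vinf S (h k)) \<le> tinf S K (segre S K h)"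
proof -
  have "\<forall>k. \<exists>s. s < S \<and> \<bar>h k s\<bar> = vinf S (h k)" using vinf_attained[OF assms] by blast
  then obtain i where i: "\<And>k. i k < S \<and> \<bar>h k (i k)\<bar> = vinf S (h k)"
    using choice[of "\<lambda>k s. s < S \<and> \<bar>h k s\<bar> = vinf S (h k)"] by blast
  define j where "j = restrict i {..<K}"
  have j: "j \<in> idx S K" using i by (simp add: j_def idx_def)
  have "(\<Prod>k<K. vinf S (h k)) = \<bar>segre S K h j\<bar>"
    using j i by (simp add: segre_def abs_prod j_def)
  also have "\<dots> \<le> tinf S K (segre S K h)"
    unfolding tinf_def using j by (intro Max_ge) auto
  finally show ?thesis .
qed

lemma tinf_segre_pos:
  assumes "S \<ge> 1" "h \<in> params_star S K"
  shows "tinf S K (segre S K h) > 0"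
proof -
  have "(\<Prod>k<K. vinf S (h k)) > 0"
    using vinf_pos_if_params_star[OF assms(2)] by (intro prod_pos) auto
  then show ?thesis using prod_vinf_le_tinf_segre[OF assms(1), where K=K and h=h] by linarith
qed

text \<open>Balancing: rescale factor k by t / \<parallel>h_k\<parallel>_\<infinity>, with t the geometric mean of the
  \<parallel>h_k\<parallel>_\<infinity>, so that the scalings multiply to 1.\<close>
lemma params_diag_equiv_ex:
  assumes S: "S \<ge> 1" and K: "K \<ge> 1" and h: "h \<in> params_star S K"
  obtains h' where "h' \<in> params_diag S K" "equiv_param K h' h"
proof -
  define a where "a k = vinf S (h k)" for k
  have a: "a k > 0" if "k < K" for k using vinf_pos_if_params_star[OF h that] by (simp add: a_def)
  have prod_a: "(\<Prod>k<K. a k) > 0" using a by (intro prod_pos) auto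
  define t where "t = (\<Prod>k<K. a k) powr (1 / real K)"
  have t: "t > 0" unfolding t_def powr_gt_zero using prod_a by linarith
  have t_power: "t ^ K = (\<Prod>k<K. a k)"
    using t K prod_a by (simp add: t_def powr_realpow[symmetric] powr_powr)
  define lam where "lam k = (if k < K then t / a k else 1)" for k
  define h' where "h' k = (\<lambda>i. lam k * h k i)" for k
  have lam: "lam k \<noteq> 0" for k using a[of k] t by (auto simp: lam_def)
  have "(\<Prod>k<K. lam k) = t ^ K / (\<Prod>k<K. a k)" using a by (simp add: lam_def prod_dividef)
  then have "(\<Prod>k<K. lam k) = 1" using t_power prod_a by (simp del: prod_zero_iff)
  then have "equiv_param K h' h" unfolding equiv_param_def h'_def by blast
  moreover have "vinf S (h' k) = t" if "k < K" for k
    using vinf_scale[OF S, of "lam k" "h k"] that a[OF that] t by (simp add: h'_def lam_def a_def)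
  then have "h' \<in> params_diag S K"
    using h lam K unfolding params_diag_def params_star_def params_def
    by (auto simp: h'_def)
  ultimately show ?thesis using that by blast
qed

lemma vinf_eq_params_diag: "h \<in> params_diag S K \<Longrightarrow> k < K \<Longrightarrow> vinf S (h k) = vinf S (h 0)"
  unfolding params_diag_def by blast

lemma abs_le_vinf_params_diag:
  assumes "h \<in> params_diag S K" "k < K" "s < S"
  shows "\<bar>h k s\<bar> \<le> vinf S (h 0)"
  using abs_le_vinf[OF assms(3), of "h k"] vinf_eq_params_diag[OF assms(1,2)] by simp

lemma vinf_power_le_tinf_segre_params_diag:
  assumes "S \<ge> 1" "h \<in> params_diag S K"
  shows "vinf S (h 0) ^ K \<le> tinf S K (segre S K h)"
proof -
  have "(\<Prod>k<K. vinf S (h k)) = (\<Prod>k<K. vinf S (h 0))"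
    by (intro prod.cong refl vinf_eq_params_diag[OF assms(2)]) simp
  then show ?thesis using prod_vinf_le_tinf_segre[OF assms(1), where K=K and h=h] by simp
qed

lemma power_pred_le_powr:
  fixes c M :: real
  assumes "c > 0" "c ^ K \<le> M" "K \<ge> 1"
  shows "c ^ (K - 1) \<le> M powr ((real K - 1) / real K)"
proof -
  have "c ^ (K - 1) = (c ^ K) powr ((real K - 1) / real K)"
    using assms by (simp add: powr_realpow[symmetric] powr_powr of_nat_diff)
  also have "\<dots> \<le> M powr ((real K - 1) / real K)"
    using assms by (intro powr_mono2) auto
  finally show ?thesis .
qed

lemma tnorm_segre_diff_le_params_diag:
  assumes S: "S \<ge> 1" and K: "K \<ge> 1" and h: "h \<in> params_diag S K" and g: "g \<in> params_diag S K"
  defines "Mx \<equiv> max (tinf S K (segre S K h)) (tinf S K (segre S K g))"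
  shows "tnorm S K (\<lambda>i. segre S K h i - segre S K g i)
     \<le> sqrt (real S) ^ (K - 1) * sqrt (real K) * Mx powr ((real K - 1) / real K)
       * pnorm2 S K (\<lambda>k i. h k i - g k i)"
proof -
  define c where "c = max (vinf S (h 0)) (vinf S (g 0))"
  have "h \<in> params_star S K" using h by (simp add: params_diag_def)
  then have c: "c > 0" using vinf_pos_if_params_star[of h S K 0] K by (simp add: c_def)
  have "c ^ K \<le> Mx"
    using vinf_power_le_tinf_segre_params_diag[OF S h] vinf_power_le_tinf_segre_params_diag[OF S g]
    by (simp add: c_def Mx_def max_def)
  then have c_power: "c ^ (K - 1) \<le> Mx powr ((real K - 1) / real K)"
    using power_pred_le_powr[OF c _ K] by blast
  have "tnorm S K (\<lambda>i. segre S K h i - segre S K g i)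
      \<le> (sqrt (real S) * c) ^ (K - 1) * sqrt (real K) * pnorm2 S K (\<lambda>k i. h k i - g k i)"
    using c abs_le_vinf_params_diag[OF h] abs_le_vinf_params_diag[OF g]
    by (intro tnorm_segre_diff_le)
      (auto simp: c_def intro: order_trans[OF _ max.cobounded1] order_trans[OF _ max.cobounded2])
  also have "(sqrt (real S) * c) ^ (K - 1) * sqrt (real K)
      = sqrt (real S) ^ (K - 1) * sqrt (real K) * c ^ (K - 1)"
    by (simp add: power_mult_distrib)
  also have "\<dots> \<le> sqrt (real S) ^ (K - 1) * sqrt (real K) * Mx powr ((real K - 1) / real K)"
    using c_power by (intro mult_left_mono) simp_all
  finally show ?thesis by (simp add: mult_right_mono pnorm2_eq_L2_set)
qed

lemma tnorm_segre_diff_le_d2: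
  assumes S: "S \<ge> 1" and K: "K \<ge> 1" and hb: "hb \<in> params_star S K" and hs: "hs \<in> params_star S K"
  defines "Mx \<equiv> max (tinf S K (segre S K hb)) (tinf S K (segre S K hs))"
  shows "tnorm S K (\<lambda>i. segre S K hb i - segre S K hs i)
     \<le> sqrt (real S) ^ (K - 1) * sqrt (real K) * Mx powr ((real K - 1) / real K) * d2 S K hs hb"
proof -
  define Z where "Z = sqrt (real S) ^ (K - 1) * sqrt (real K) * Mx powr ((real K - 1) / real K)"
  have "Mx > 0" using tinf_segre_pos[OF S hb] by (simp add: Mx_def)
  then have Z: "Z > 0" using S K by (simp add: Z_def)
  let ?D = "{pnorm2 S K (\<lambda>k i. h' k i - g' k i) | h' g'.
      h' \<in> params_diag S K \<and> equiv_param K h' hs \<and> g' \<in> params_diag S K \<and> equiv_param K g' hb}"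
  obtain h0 where "h0 \<in> params_diag S K" "equiv_param K h0 hs"
    using params_diag_equiv_ex[OF S K hs] .
  moreover obtain g0 where "g0 \<in> params_diag S K" "equiv_param K g0 hb"
    using params_diag_equiv_ex[OF S K hb] .
  ultimately have "?D \<noteq> {}" by blast
  moreover have "tnorm S K (\<lambda>i. segre S K hb i - segre S K hs i) / Z \<le> x" if "x \<in> ?D" for x
  proof -
    obtain h' g' where x: "x = pnorm2 S K (\<lambda>k i. h' k i - g' k i)"
      and h': "h' \<in> params_diag S K" "equiv_param K h' hs"
      and g': "g' \<in> params_diag S K" "equiv_param K g' hb"
      using \<open>x \<in> ?D\<close> by blast
    have "pnorm2 S K (\<lambda>k i. g' k i - h' k i) = x"
      unfolding x pnorm2_def by (simp add: power2_commute)
    then have "tnorm S K (\<lambda>i. segre S K hb i - segre S K hs i) \<le> Z * x"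
      using tnorm_segre_diff_le_params_diag[OF S K g'(1) h'(1)]
      unfolding segre_eq_if_equiv_param[OF h'(2)] segre_eq_if_equiv_param[OF g'(2)] Z_def Mx_def
      by simp
    then show ?thesis using Z by (simp add: pos_divide_le_eq mult.commute)
  qed
  ultimately have "tnorm S K (\<lambda>i. segre S K hb i - segre S K hs i) / Z \<le> d2 S K hs hb"
    unfolding d2_def by (rule cInf_greatest)
  then show ?thesis using Z by (simp add: Z_def pos_divide_le_eq mult.commute)
qed

lemma tnorm_segre_diff_le_of_d2_le:
  assumes S: "S \<ge> 1" and K: "K \<ge> 1" and hb: "hb \<in> params_star S K" and hs: "hs \<in> params_star S K"
    and C: "C > 0" and f: "f \<ge> 0"
    and d2_le: "d2 S K hs hb \<le> C * min (tinf S K (segre S K hb) powr (1 / real K - 1))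
                       (tinf S K (segre S K hs) powr (1 / real K - 1)) * f"
  shows "tnorm S K (\<lambda>i. segre S K hb i - segre S K hs i) \<le> C * sqrt (real S) ^ (K - 1) * sqrt (real K) * f"
proof -
  define Mx where "Mx = max (tinf S K (segre S K hb)) (tinf S K (segre S K hs))"
  define W where "W = sqrt (real S) ^ (K - 1) * sqrt (real K)"
  define p q where "p = 1 / real K - 1" and "q = (real K - 1) / real K"
  have "Mx > 0" using tinf_segre_pos[OF S hb] by (simp add: Mx_def)
  then have exponents: "Mx powr q * Mx powr p = 1"
    using K by (simp add: p_def q_def powr_add[symmetric] field_simps)
  have "min (tinf S K (segre S K hb) powr p) (tinf S K (segre S K hs) powr p) \<le> Mx powr p"
    by (simp add: Mx_def max_def)
  then have "C * min (tinf S K (segre S K hb) powr p) (tinf S K (segre S K hs) powr p) * f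
      \<le> C * Mx powr p * f"
    using C f by (intro mult_right_mono mult_left_mono) simp_all
  with d2_le have d2_le': "d2 S K hs hb \<le> C * Mx powr p * f" by (simp add: p_def)
  have "tnorm S K (\<lambda>i. segre S K hb i - segre S K hs i) \<le> W * Mx powr q * d2 S K hs hb"
    using tnorm_segre_diff_le_d2[OF S K hb hs] unfolding Mx_def W_def q_def .
  also have "\<dots> \<le> W * Mx powr q * (C * Mx powr p * f)"
    using d2_le' by (rule mult_left_mono) (simp add: W_def)
  also have "\<dots> = C * W * f * (Mx powr q * Mx powr p)" by (simp only: mult_ac)
  finally show ?thesis by (simp add: exponents W_def mult.assoc)
qed

section \<open>The lifting operator\<close>

lemma tensors_diff: "T \<in> tensors S K \<Longrightarrow> T' \<in> tensors S K \<Longrightarrow> (\<lambda>i. T i - T' i) \<in> tensors S K"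
  by (simp add: tensors_def)

lemma segre_in_tensors: "segre S K h \<in> tensors S K"
  by (simp add: segre_def tensors_def)

lemma proj_in_tensors: "T \<in> tensors S K \<Longrightarrow> proj S K Sp T \<in> tensors S K"
  by (simp add: proj_def tensors_def)

lemma abs_le_tnorm: "i \<in> idx S K \<Longrightarrow> \<bar>T i\<bar> \<le> tnorm S K T"
  using member_le_L2_set[of "idx S K" i "\<lambda>i. \<bar>T i\<bar>"] by (simp add: tnorm_eq_L2_set L2_set_def)

lemma fro_nonneg: "fro a b X \<ge> 0"
  by (simp add: fro_def sum_nonneg)

lemma fro_scale: "fro a b (\<lambda>r c. l * X r c) = \<bar>l\<bar> * fro a b X"
proof -
  have "(\<Sum>r<a. \<Sum>c<b. (l * X r c)\<^sup>2) = l\<^sup>2 * (\<Sum>r<a. \<Sum>c<b. (X r c)\<^sup>2)"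
    by (simp add: power_mult_distrib sum_distrib_left)
  then show ?thesis by (simp add: fro_def real_sqrt_mult)
qed

lemma fro_le_sum_abs: "fro a b X \<le> (\<Sum>r<a. \<Sum>c<b. \<bar>X r c\<bar>)"
proof -
  have "fro a b X = L2_set (\<lambda>p. X (fst p) (snd p)) ({..<a} \<times> {..<b})"
    unfolding fro_def L2_set_def by (simp add: sum.cartesian_product case_prod_beta)
  also have "\<dots> \<le> (\<Sum>p\<in>{..<a} \<times> {..<b}. \<bar>X (fst p) (snd p)\<bar>)" by (rule L2_set_le_sum_abs)
  finally show ?thesis by (simp add: sum.cartesian_product case_prod_beta)
qed

lemma is_lifting_linear:
  assumes "is_lifting S K m M A" "T \<in> tensors S K" "T' \<in> tensors S K"
  shows "A (\<lambda>i. a * T i + b * T' i) = (\<lambda>r c. a * A T r c + b * A T' r c)"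
  using assms unfolding is_lifting_def by blast

lemma is_lifting_in_mats: "is_lifting S K m M A \<Longrightarrow> T \<in> tensors S K \<Longrightarrow> A T \<in> mats (m 0) (m K)"
  unfolding is_lifting_def by blast

lemma is_lifting_diff:
  assumes "is_lifting S K m M A" "T \<in> tensors S K" "T' \<in> tensors S K"
  shows "A (\<lambda>i. T i - T' i) = (\<lambda>r c. A T r c - A T' r c)"
  using is_lifting_linear[OF assms, of 1 "-1"] by simp

lemma is_lifting_zero:
  assumes "is_lifting S K m M A"
  shows "A (\<lambda>_. 0) = (\<lambda>_ _. 0)"
proof -
  have "(\<lambda>_. 0) \<in> tensors S K" by (simp add: tensors_def)
  from is_lifting_linear[OF assms this this, of 0 0] show ?thesis by simp
qed

lemma is_lifting_scale:
  assumes "is_lifting S K m M A" "T \<in> tensors S K"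
  shows "A (\<lambda>i. a * T i) = (\<lambda>r c. a * A T r c)"
  using is_lifting_linear[OF assms assms(2), of a 0] by simp

lemma is_lifting_sum:
  assumes L: "is_lifting S K m M A" and J: "finite J" and f: "\<And>j. j \<in> J \<Longrightarrow> f j \<in> tensors S K"
  shows "A (\<lambda>i. \<Sum>j\<in>J. f j i) = (\<lambda>r c. \<Sum>j\<in>J. A (f j) r c)"
  using J f
proof (induction J rule: finite_induct)
  case empty
  then show ?case using is_lifting_zero[OF L] by simp
next
  case (insert x F)
  have "(\<lambda>i. \<Sum>j\<in>F. f j i) \<in> tensors S K"
    using insert.prems by (auto simp: tensors_def)
  then have "A (\<lambda>i. 1 * f x i + 1 * (\<Sum>j\<in>F. f j i)) = (\<lambda>r c. 1 * A (f x) r c + 1 * A (\<lambda>i. \<Sum>j\<in>F. f j i) r c)"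
    using insert.prems by (intro is_lifting_linear[OF L]) auto
  with insert show ?case by simp
qed

lemma is_lifting_bounded:
  assumes L: "is_lifting S K m M A"
  obtains B where "\<And>T. T \<in> tensors S K \<Longrightarrow> fro (m 0) (m K) (A T) \<le> B * tnorm S K T"
proof -
  define E where "E j = (\<lambda>i. if i = j then (1::real) else 0)" for j :: "nat \<Rightarrow> nat"
  have E: "E j \<in> tensors S K" if "j \<in> idx S K" for j using that by (auto simp: E_def tensors_def)
  define B where "B = (\<Sum>r<m 0. \<Sum>c<m K. \<Sum>j\<in>idx S K. \<bar>A (E j) r c\<bar>)"
  have "fro (m 0) (m K) (A T) \<le> B * tnorm S K T" if T: "T \<in> tensors S K" for T
  proof -
    have expansion: "T = (\<lambda>i. \<Sum>j\<in>idx S K. T j * E j i)"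
    proof
      fix i
      have "(\<Sum>j\<in>idx S K. T j * E j i) = (\<Sum>j\<in>idx S K. if i = j then T j else 0)"
        by (intro sum.cong) (auto simp: E_def)
      then show "T i = (\<Sum>j\<in>idx S K. T j * E j i)" using T by (auto simp: tensors_def)
    qed
    have "A T = A (\<lambda>i. \<Sum>j\<in>idx S K. T j * E j i)" using expansion by (rule arg_cong)
    also have "\<dots> = (\<lambda>r c. \<Sum>j\<in>idx S K. A (\<lambda>i. T j * E j i) r c)"
      by (rule is_lifting_sum[OF L finite_idx]) (auto simp: E_def tensors_def)
    finally have AT: "A T r c = (\<Sum>j\<in>idx S K. T j * A (E j) r c)" for r c
      using is_lifting_scale[OF L E] by simp
    have entry: "\<bar>A T r c\<bar> \<le> (\<Sum>j\<in>idx S K. \<bar>A (E j) r c\<bar>) * tnorm S K T" for r c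
    proof -
      have "\<bar>A T r c\<bar> \<le> (\<Sum>j\<in>idx S K. \<bar>T j\<bar> * \<bar>A (E j) r c\<bar>)"
        unfolding AT abs_mult[symmetric] by (rule sum_abs)
      also have "\<dots> \<le> (\<Sum>j\<in>idx S K. tnorm S K T * \<bar>A (E j) r c\<bar>)"
        by (intro sum_mono mult_right_mono abs_le_tnorm) auto
      finally show ?thesis by (simp add: sum_distrib_left mult.commute)
    qed
    have "(\<Sum>r<m 0. \<Sum>c<m K. \<bar>A T r c\<bar>)
        \<le> (\<Sum>r<m 0. \<Sum>c<m K. (\<Sum>j\<in>idx S K. \<bar>A (E j) r c\<bar>) * tnorm S K T)"
      by (intro sum_mono entry)
    also have "\<dots> = B * tnorm S K T" by (simp add: B_def sum_distrib_right)
    finally have "(\<Sum>r<m 0. \<Sum>c<m K. \<bar>A T r c\<bar>) \<le> B * tnorm S K T" .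
    then show ?thesis using fro_le_sum_abs order_trans by blast
  qed
  then show ?thesis using that by blast
qed

lemma fro_lifting_le_sigma_max:
  assumes L: "is_lifting S K m M A" and U: "U \<in> tensors S K"
  shows "fro (m 0) (m K) (A U) \<le> sigma_max S K m A * tnorm S K U"
proof -
  obtain B where B: "\<And>T. T \<in> tensors S K \<Longrightarrow> fro (m 0) (m K) (A T) \<le> B * tnorm S K T"
    using is_lifting_bounded[OF L] by blast
  have bdd: "bdd_above {fro (m 0) (m K) (A T) | T. T \<in> tensors S K \<and> tnorm S K T \<le> 1}"
  proof (rule bdd_aboveI)
    fix x assume "x \<in> {fro (m 0) (m K) (A T) | T. T \<in> tensors S K \<and> tnorm S K T \<le> 1}"
    then obtain T where T: "x = fro (m 0) (m K) (A T)" "T \<in> tensors S K" "tnorm S K T \<le> 1" by blast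
    have "tnorm S K T \<ge> 0" by (simp add: tnorm_eq_L2_set)
    then show "x \<le> \<bar>B\<bar>"
      using B[OF T(2)] T(1,3) by (smt (verit) mult_left_le abs_ge_self mult_right_mono)
  qed
  show ?thesis
  proof (cases "tnorm S K U = 0")
    case True
    then have "U = (\<lambda>_. 0)" using U by (auto simp: tnorm_eq_L2_set L2_set_eq_0_iff tensors_def)
    then show ?thesis using is_lifting_zero[OF L] True by (simp add: fro_def)
  next
    case False
    define t where "t = tnorm S K U"
    have t: "t > 0" using False by (simp add: t_def tnorm_eq_L2_set order_less_le)
    define V where "V = (\<lambda>i. (1 / t) * U i)"
    have V: "V \<in> tensors S K" using U by (simp add: V_def tensors_def)
    have "tnorm S K V = 1"
      using L2_set_right_distrib[of "1 / t" U "idx S K"] t by (simp add: V_def t_def tnorm_eq_L2_set)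
    then have "fro (m 0) (m K) (A V) \<le> sigma_max S K m A"
      unfolding sigma_max_def using V by (intro cSup_upper[OF _ bdd]) auto
    moreover have "fro (m 0) (m K) (A V) = fro (m 0) (m K) (A U) / t"
      unfolding V_def is_lifting_scale[OF L U] fro_scale using t by simp
    ultimately show ?thesis using t by (simp add: t_def pos_divide_le_eq mult.commute)
  qed
qed

section \<open>Sums of Segre tensors and stable recovery\<close>

definition scale_first :: "real \<Rightarrow> param \<Rightarrow> param" where
  "scale_first c h = (\<lambda>k i. if k = 0 then c * h k i else h k i)"

lemma segre_scale_first:
  assumes "K \<ge> 1"
  shows "segre S K (scale_first c h) = (\<lambda>i. c * segre S K h i)"
proof
  fix i
  have "(\<Prod>k<K. scale_first c h k (i k)) = (\<Prod>k<K. (if k = 0 then c else 1) * h k (i k))"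
    by (intro prod.cong) (auto simp: scale_first_def)
  also have "\<dots> = c * (\<Prod>k<K. h k (i k))" using assms by (simp add: prod.distrib prod.delta)
  finally show "segre S K (scale_first c h) i = c * segre S K h i" by (simp add: segre_def)
qed

lemma scale_first_params_S: "h \<in> params_S S K Sp \<Longrightarrow> scale_first c h \<in> params_S S K Sp"
  by (auto simp: params_S_def params_def scale_first_def)

lemma scale_first_params_star: "h \<in> params_star S K \<Longrightarrow> c \<noteq> 0 \<Longrightarrow> scale_first c h \<in> params_star S K"
  by (auto simp: params_star_def params_def scale_first_def)

lemma segre_eq_0_if_not_params_star:
  assumes "h \<in> params S K" "h \<notin> params_star S K"
  shows "segre S K h = (\<lambda>_. 0)"
proof
  fix i
  obtain k where k: "k < K" "\<forall>s<S. h k s = 0" using assms unfolding params_star_def by auto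
  show "segre S K h i = 0"
  proof (cases "i \<in> idx S K")
    case True
    then have "h k (i k) = 0" using k by (auto simp: idx_def)
    then show ?thesis using True k by (auto simp: segre_def intro!: prod_zero bexI[where x=k])
  qed (simp add: segre_def)
qed

lemma proj_segre_sum:
  assumes "T \<in> segre_sum S K Sp Sp'"
  shows "proj S K (sunion Sp Sp') T = T"
proof
  fix i
  obtain h g where T: "T = (\<lambda>i. segre S K h i + segre S K g i)"
    and h: "h \<in> params_S S K Sp" and g: "g \<in> params_S S K Sp'"
    using assms unfolding segre_sum_def by blast
  show "proj S K (sunion Sp Sp') T i = T i"
  proof (cases "in_supp K i (sunion Sp Sp')")
    case False
    then obtain k where k: "k < K" "i k \<notin> Sp k" "i k \<notin> Sp' k"
      by (auto simp: in_supp_def sunion_def)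
    then have "h k (i k) = 0" "g k (i k) = 0" using h g by (auto simp: params_S_def)
    then have "segre S K h i = 0" "segre S K g i = 0" using k
      by (auto simp: segre_def intro!: prod_zero bexI[where x=k])
    then show ?thesis using False by (simp add: proj_def T)
  qed (simp add: proj_def)
qed

text \<open>The stability hypothesis only speaks about nondegenerate parameters, so a sum
  P h + P g is rewritten as P hb - P hs with hb, hs in params_star: flip the sign of one
  factor of g, and if one summand vanishes split the other one into two halves.\<close>
lemma segre_sum_eq_segre_diff:
  assumes K: "K \<ge> 1" and T: "T \<in> segre_sum S K Sp Sp'"
  obtains "T = (\<lambda>_. 0)"
  | Sp1 Sp2 hb hs where "Sp1 \<in> {Sp, Sp'}" "Sp2 \<in> {Sp, Sp'}"
      "hb \<in> params_S S K Sp1" "hb \<in> params_star S K" "hs \<in> params_S S K Sp2" "hs \<in> params_star S K"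
      "T = (\<lambda>i. segre S K hb i - segre S K hs i)"
proof -
  obtain h g where T: "T = (\<lambda>i. segre S K h i + segre S K g i)"
    and h: "h \<in> params_S S K Sp" and g: "g \<in> params_S S K Sp'"
    using assms unfolding segre_sum_def by blast
  have halves: "segre S K f = (\<lambda>i. segre S K (scale_first (1/2) f) i - segre S K (scale_first (-1/2) f) i)"
    for f using K by (simp add: segre_scale_first)
  have vanish: "segre S K f = (\<lambda>_. 0)" if "f \<in> params_S S K Sp''" "f \<notin> params_star S K" for f Sp''
    using that by (intro segre_eq_0_if_not_params_star) (simp_all add: params_S_def)
  consider "h \<in> params_star S K" "g \<in> params_star S K" | "h \<in> params_star S K" "g \<notin> params_star S K"
    | "h \<notin> params_star S K" "g \<in> params_star S K" | "h \<notin> params_star S K" "g \<notin> params_star S K"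
    by blast
  then show ?thesis
  proof cases
    case 1
    have "T = (\<lambda>i. segre S K h i - segre S K (scale_first (-1) g) i)"
      using K by (simp add: T segre_scale_first)
    with 1 h g show ?thesis
      by (intro that(2)[of Sp Sp']) (simp_all add: scale_first_params_S scale_first_params_star)
  next
    case 2
    then have "T = (\<lambda>i. segre S K (scale_first (1/2) h) i - segre S K (scale_first (-1/2) h) i)"
      using T halves[of h] vanish[OF g] by simp
    with 2 h show ?thesis
      by (intro that(2)[of Sp Sp]) (simp_all add: scale_first_params_S scale_first_params_star)
  next
    case 3
    then have "T = (\<lambda>i. segre S K (scale_first (1/2) g) i - segre S K (scale_first (-1/2) g) i)"
      using T halves[of g] vanish[OF h] by simp
    with 3 g show ?thesis
      by (intro that(2)[of Sp' Sp']) (simp_all add: scale_first_params_S scale_first_params_star)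
  next
    case 4
    then show ?thesis using that(1) T vanish[OF h] vanish[OF g] by simp
  qed
qed

definition stable_recovery ::
  "nat \<Rightarrow> nat \<Rightarrow> (nat \<Rightarrow> nat) \<Rightarrow> (tensor \<Rightarrow> mat) \<Rightarrow> support set \<Rightarrow> real \<Rightarrow> real \<Rightarrow> bool" where
  "stable_recovery S K m A MM C \<delta> \<longleftrightarrow>
     (\<forall>Sp\<in>MM. \<forall>hb\<in>params_S S K Sp. \<forall>e\<in>mats (m 0) (m K).
        fro (m 0) (m K) e \<le> \<delta> \<longrightarrow>
        (\<forall>Sps\<in>MM. \<forall>hs\<in>params_S S K Sps.
           hb \<in> params_star S K \<and> hs \<in> params_star S K \<and>
           fro (m 0) (m K) (msub (A (segre S K hs)) (madd (A (segre S K hb)) e))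
             \<le> fro (m 0) (m K) e
           \<longrightarrow> d2 S K hs hb \<le>
               C * min (tinf S K (segre S K hb) powr (1 / real K - 1))
                       (tinf S K (segre S K hs) powr (1 / real K - 1))
                 * fro (m 0) (m K) e))"

text \<open>Apply stability to the exact reconstruction hs of the data X = A(P hb) + e with
  noise e = -A(P hb - P hs).\<close>
lemma tnorm_segre_diff_le_if_stable_recovery:
  assumes S: "S \<ge> 1" and K: "K \<ge> 1" and L: "is_lifting S K m M A" and C: "C > 0"
    and stable: "stable_recovery S K m A MM C \<delta>"
    and Sp1: "Sp1 \<in> MM" and hb: "hb \<in> params_S S K Sp1" "hb \<in> params_star S K"
    and Sp2: "Sp2 \<in> MM" and hs: "hs \<in> params_S S K Sp2" "hs \<in> params_star S K"
    and small: "fro (m 0) (m K) (A (\<lambda>i. segre S K hb i - segre S K hs i)) \<le> \<delta>"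
  shows "tnorm S K (\<lambda>i. segre S K hb i - segre S K hs i)
      \<le> C * sqrt (real S) ^ (K - 1) * sqrt (real K) * fro (m 0) (m K) (A (\<lambda>i. segre S K hb i - segre S K hs i))"
proof -
  let ?T = "\<lambda>i. segre S K hb i - segre S K hs i"
  define e where "e = (\<lambda>r c. - A ?T r c)"
  have T: "?T \<in> tensors S K" by (intro tensors_diff segre_in_tensors)
  have fro_e: "fro (m 0) (m K) e = fro (m 0) (m K) (A ?T)"
    using fro_scale[of "m 0" "m K" "-1" "A ?T"] by (simp add: e_def)
  have e: "e \<in> mats (m 0) (m K)"
    using is_lifting_in_mats[OF L T] by (simp add: e_def mats_def)
  have "msub (A (segre S K hs)) (madd (A (segre S K hb)) e) = (\<lambda>_ _. 0)"
    by (simp add: msub_def madd_def e_def is_lifting_diff[OF L segre_in_tensors segre_in_tensors])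
  then have "fro (m 0) (m K) (msub (A (segre S K hs)) (madd (A (segre S K hb)) e)) \<le> fro (m 0) (m K) e"
    by (simp add: fro_def sum_nonneg)
  moreover have "fro (m 0) (m K) e \<le> \<delta>" using small fro_e by simp
  ultimately have d2_le: "d2 S K hs hb \<le> C * min (tinf S K (segre S K hb) powr (1 / real K - 1))
      (tinf S K (segre S K hs) powr (1 / real K - 1)) * fro (m 0) (m K) e"
    using stable[unfolded stable_recovery_def, rule_format, OF Sp1 hb(1) e _ Sp2 hs(1)] hb(2) hs(2)
    by blast
  from tnorm_segre_diff_le_of_d2_le[OF S K hb(2) hs(2) C fro_nonneg d2_le] show ?thesis unfolding fro_e .
qed

lemma tnorm_le_if_stable_recovery:
  assumes S: "S \<ge> 1" and K: "K \<ge> 1" and L: "is_lifting S K m M A" and C: "C > 0"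
    and stable: "stable_recovery S K m A MM C \<delta>"
    and Sp: "Sp \<in> MM" "Sp' \<in> MM" and T: "T \<in> segre_sum S K Sp Sp'"
    and small: "fro (m 0) (m K) (A T) \<le> \<delta>"
  shows "tnorm S K T \<le> C * sqrt (real S) ^ (K - 1) * sqrt (real K) * fro (m 0) (m K) (A T)"
  using K T
proof (cases rule: segre_sum_eq_segre_diff)
  case 1
  then have "tnorm S K T = 0" by (simp add: tnorm_def)
  then show ?thesis using C by (simp add: fro_nonneg)
next
  case (2 Sp1 Sp2 hb hs)
  have "Sp1 \<in> MM" "Sp2 \<in> MM" using 2(1,2) Sp by auto
  from tnorm_segre_diff_le_if_stable_recovery[OF S K L C stable this(1) 2(3,4) this(2) 2(5,6)]
  show ?thesis using small unfolding 2(7) by blast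
qed

lemma sqrt_power_pred_eq_powr:
  assumes "S \<ge> 1" "K \<ge> 1"
  shows "sqrt (real S) ^ (K - 1) = real S powr ((real K - 1) / 2)"
proof -
  have "sqrt (real S) ^ (K - 1) = (real S powr (1 / 2)) powr real (K - 1)"
    using assms(1) by (simp add: powr_realpow powr_half_sqrt)
  also have "\<dots> = real S powr ((real K - 1) / 2)" using assms(2) by (simp add: powr_powr of_nat_diff)
  finally show ?thesis .
qed

theorem theorem4:
  fixes S K :: nat and m :: "nat \<Rightarrow> nat" and M :: "nat \<Rightarrow> vec \<Rightarrow> mat"
    and A :: "tensor \<Rightarrow> mat" and MM :: "support set" and C \<delta> :: real
  assumes "K \<ge> 1" and "S \<ge> 1"
    and "\<forall>k\<le>K. m k > 0"
    and "linear_factors S K m M"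
    and "is_lifting S K m M A"
    and "finite MM"
    and "\<forall>Sp\<in>MM. \<forall>k<K. Sp k \<subseteq> {..<S}"
    and "C > 0" and "\<delta> > 0"
    and stable: "\<forall>Sp\<in>MM. \<forall>hb\<in>params_S S K Sp. \<forall>e\<in>mats (m 0) (m K).
        fro (m 0) (m K) e \<le> \<delta> \<longrightarrow>
        (\<forall>Sps\<in>MM. \<forall>hs\<in>params_S S K Sps.
           hb \<in> params_star S K \<and> hs \<in> params_star S K \<and>
           fro (m 0) (m K) (msub (A (segre S K hs)) (madd (A (segre S K hb)) e))
             \<le> fro (m 0) (m K) e
           \<longrightarrow> d2 S K hs hb \<le>
               C * min (tinf S K (segre S K hb) powr (1 / real K - 1))
                       (tinf S K (segre S K hs) powr (1 / real K - 1))
                 * fro (m 0) (m K) e)"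
  shows "deep_NSP S K m A MM
           (C * real S powr ((real K - 1) / 2) * sqrt (real K) * sigma_max S K m A) \<delta>"
  unfolding deep_NSP_def
proof (intro ballI allI impI, elim conjE)
  have K: "K \<ge> 1" and S: "S \<ge> 1" and L: "is_lifting S K m M A" and C: "C > 0"
    and stable_rec: "stable_recovery S K m A MM C \<delta>"
    using assms unfolding stable_recovery_def by auto
  fix Sp Sp' T T'
  assume Sp: "Sp \<in> MM" "Sp' \<in> MM" and T: "T \<in> segre_sum S K Sp Sp'"
    and small: "fro (m 0) (m K) (A (proj S K (sunion Sp Sp') T)) \<le> \<delta>"
    and T': "T' \<in> tensors S K" and ker: "A (proj S K (sunion Sp Sp') T') = (\<lambda>_ _. 0)"
  let ?D = "\<lambda>i. T i - proj S K (sunion Sp Sp') T' i"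
  have T_tensor: "T \<in> tensors S K"
    using T by (auto simp: segre_sum_def tensors_def segre_def)
  have "A ?D = A T"
    using is_lifting_diff[OF L T_tensor proj_in_tensors[OF T']] ker by simp
  then have sigma: "fro (m 0) (m K) (A T) \<le> sigma_max S K m A * tnorm S K ?D"
    using fro_lifting_le_sigma_max[OF L tensors_diff[OF T_tensor proj_in_tensors[OF T', of "sunion Sp Sp'"]]] by simp
  have "tnorm S K T \<le> C * sqrt (real S) ^ (K - 1) * sqrt (real K) * fro (m 0) (m K) (A T)"
    using tnorm_le_if_stable_recovery[OF S K L C stable_rec Sp T] small proj_segre_sum[OF T] by simp
  also have "\<dots> \<le> C * sqrt (real S) ^ (K - 1) * sqrt (real K) * (sigma_max S K m A * tnorm S K ?D)"
    using sigma C by (intro mult_left_mono) simp_all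
  finally show "tnorm S K T
      \<le> C * real S powr ((real K - 1) / 2) * sqrt (real K) * sigma_max S K m A * tnorm S K ?D"
    unfolding sqrt_power_pred_eq_powr[OF S K, symmetric] by (simp only: mult_ac)
qed

end
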